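(* For every real $\omega>0$, $$\zeta(3)=-2\omega^2\sum_{m=1}^\infty\left(\frac{\pi^2m^2}{\omega^2}\log\Big(1+\frac{\omega^2}{\pi^2m^2}\Big)-1\right)+2\omega\,\mathrm{Li}_2(e^{-2\omega})+\mathrm{Li}_3(e^{-2\omega})-2\omega^2\log(e^{2\omega}-1)+\frac{(10\omega+3)\,\omega^2}{3}.$$
   Context: $\zeta$ is the Riemann zeta function and $\mathrm{Li}_k(z)=\sum_{n\ge1}z^n/n^k$ ($|z|\le1$) is the polylogarithm. *)

theory Defs
  imports "HOL-Analysis.Analysis"
begin

definition zeta :: "real \<Rightarrow> real" where
  "zeta s = (\<Sum>n. 1 / (real (Suc n)) powr s)"

definition polylog :: "nat \<Rightarrow> real \<Rightarrow> real" where
  "polylog k z = (\<Sum>n. z ^ Suc n / (real (Suc n)) ^ k)"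

end

theory Submission
  imports Defs "HOL-Real_Asymp.Real_Asymp"
begin

text \<open>Regarded as a function of \<open>\<omega> > 0\<close>, the right-hand side has derivative zero.
  Differentiating termwise, the logarithmic series contributes \<open>-2 (\<omega> - \<omega>\<^sup>2 coth \<omega>)\<close> by the
  partial fraction expansion \<open>coth \<omega> - 1/\<omega> = \<Sum>\<^sub>m 2\<omega> / (\<pi>\<^sup>2m\<^sup>2 + \<omega>\<^sup>2)\<close>, which is the logarithmic
  derivative of Euler's product \<open>sinh \<omega> / \<omega> = \<Prod>\<^sub>m (1 + \<omega>\<^sup>2 / (\<pi>\<^sup>2m\<^sup>2))\<close>. The polylogarithms
  satisfy \<open>d/d\<omega> Li\<^sub>k\<^sub>+\<^sub>1(exp (-2\<omega>)) = -2 Li\<^sub>k(exp (-2\<omega>))\<close> and \<open>Li\<^sub>1(q) = -ln (1 - q)\<close>, and with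
  \<open>coth \<omega> = (e\<^sup>2\<^sup>\<omega> + 1) / (e\<^sup>2\<^sup>\<omega> - 1)\<close> all terms cancel. Hence the right-hand side is constant,
  equal to its limit as \<open>\<omega> \<rightarrow> 0\<^sup>+\<close>, which is \<open>Li\<^sub>3(1) = \<zeta>(3)\<close>.\<close>

lemma continuous_on_suminf_Weierstrass:
  fixes f :: "nat \<Rightarrow> 'a::topological_space \<Rightarrow> 'b::banach"
  assumes "\<And>n. continuous_on A (f n)" "\<And>n x. x \<in> A \<Longrightarrow> norm (f n x) \<le> M n" "summable M"
  shows "continuous_on A (\<lambda>x. \<Sum>n. f n x)"
proof (rule uniform_limit_theorem[OF _ Weierstrass_m_test])
  show "\<forall>\<^sub>F n in sequentially. continuous_on A (\<lambda>x. \<Sum>i<n. f i x)"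
    using assms(1) by (intro always_eventually allI continuous_on_sum) auto
qed (use assms in auto)

lemma has_field_derivative_suminf_Weierstrass:
  fixes f f' :: "nat \<Rightarrow> 'a::{real_normed_field,banach} \<Rightarrow> 'a"
  assumes S: "open S" "convex S" "x0 \<in> S" "summable (\<lambda>n. f n x0)" "x \<in> S"
    and deriv: "\<And>n x. x \<in> S \<Longrightarrow> (f n has_field_derivative f' n x) (at x)"
    and bound: "\<And>n x. x \<in> S \<Longrightarrow> norm (f' n x) \<le> M n" and "summable M"
  shows "summable (\<lambda>n. f n x)"
    and "((\<lambda>x. \<Sum>n. f n x) has_field_derivative (\<Sum>n. f' n x)) (at x)"
proof -
  have uniform: "uniformly_convergent_on S (\<lambda>n x. \<Sum>i<n. f' i x)"
    using bound \<open>summable M\<close> by (rule Weierstrass_m_test')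
  have within: "\<And>n x. x \<in> S \<Longrightarrow> (f n has_field_derivative f' n x) (at x within S)"
    using deriv has_field_derivative_at_within by blast
  have interior: "x \<in> interior S"
    using S by (simp add: interior_open)
  show "summable (\<lambda>n. f n x)"
    and "((\<lambda>x. \<Sum>n. f n x) has_field_derivative (\<Sum>n. f' n x)) (at x)"
    using has_field_derivative_series'[OF S(2) within uniform S(3,4) interior] by auto
qed

lemma has_real_derivative_zero_imp_eq_right_limit:
  fixes f :: "real \<Rightarrow> real"
  assumes "\<And>x. x > a \<Longrightarrow> (f has_real_derivative 0) (at x)"
    and "(f \<longlongrightarrow> L) (at_right a)" and "x > a"
  shows "f x = L"
proof -
  obtain C where C: "\<And>y. y \<in> {a<..} \<Longrightarrow> f y = C"
    using has_field_derivative_zero_constant[of "{a<..}" f] assms(1)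
    by (metis convex_real_interval(3) greaterThan_iff has_field_derivative_at_within)
  have "eventually (\<lambda>y. f y = C) (at_right a)"
    using C eventually_at_right_less by (metis (mono_tags, lifting) eventually_mono greaterThan_iff)
  then have "((\<lambda>_. C) \<longlongrightarrow> L) (at_right a)"
    using assms(2) tendsto_cong by fastforce
  then have "C = L"
    using tendsto_unique[OF trivial_limit_at_right_real tendsto_const] by blast
  with C assms(3) show ?thesis by simp
qed

lemma sinh_product_formula:
  fixes w :: real
  assumes "w \<noteq> 0"
  shows "(\<lambda>n. \<Prod>k=1..n. 1 + w\<^sup>2 / (pi\<^sup>2 * (real k)\<^sup>2)) \<longlonglongrightarrow> sinh w / w"
proof -
  define z where "z = \<i> * of_real (w / pi)"
  have "(\<lambda>n. of_real pi * z * (\<Prod>k=1..n. 1 - z\<^sup>2 / of_nat k ^ 2)) \<longlonglongrightarrow> sin (of_real pi * z)"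
    by (rule sin_product_formula_complex)
  moreover have "of_real pi * z * (\<Prod>k=1..n. 1 - z\<^sup>2 / of_nat k ^ 2)
      = \<i> * of_real w * of_real (\<Prod>k=1..n. 1 + w\<^sup>2 / (pi\<^sup>2 * (real k)\<^sup>2))" for n
    by (simp add: z_def power_mult_distrib power_divide)
  moreover have "sin (of_real pi * z) = \<i> * of_real (sinh w)"
    by (simp add: z_def sin_i_times sinh_def exp_of_real exp_minus)
  ultimately have "(\<lambda>n. \<i> * of_real w * of_real (\<Prod>k=1..n. 1 + w\<^sup>2 / (pi\<^sup>2 * (real k)\<^sup>2)))
      \<longlonglongrightarrow> \<i> * of_real w * of_real (sinh w / w)"
    using assms by simp
  then have "(\<lambda>n. of_real (\<Prod>k=1..n. 1 + w\<^sup>2 / (pi\<^sup>2 * (real k)\<^sup>2))) \<longlonglongrightarrow> (of_real (sinh w / w) :: complex)"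
    using assms by (subst (asm) tendsto_mult_left_iff) auto
  then show ?thesis
    by (simp only: tendsto_of_real_iff)
qed

lemma ln_one_plus_sq_div_pi_sq_sums:
  fixes w :: real
  assumes "w \<noteq> 0"
  shows "(\<lambda>m. ln (1 + w\<^sup>2 / (pi\<^sup>2 * (real (Suc m))\<^sup>2))) sums ln (sinh w / w)"
proof -
  have "sinh w / w > 0"
    using assms by (cases "w > 0") (auto simp: divide_pos_pos divide_neg_neg)
  then have "(\<lambda>n. ln (\<Prod>k=1..n. 1 + w\<^sup>2 / (pi\<^sup>2 * (real k)\<^sup>2))) \<longlonglongrightarrow> ln (sinh w / w)"
    using assms by (intro tendsto_ln sinh_product_formula) auto
  moreover have "ln (\<Prod>k=1..n. 1 + w\<^sup>2 / (pi\<^sup>2 * (real k)\<^sup>2))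
      = (\<Sum>m<n. ln (1 + w\<^sup>2 / (pi\<^sup>2 * (real (Suc m))\<^sup>2)))" for n
  proof -
    have "1 + w\<^sup>2 / (pi\<^sup>2 * (real k)\<^sup>2) \<noteq> 0" for k
      using add_pos_nonneg[of 1 "w\<^sup>2 / (pi\<^sup>2 * (real k)\<^sup>2)"] by simp
    then have "ln (\<Prod>k=1..n. 1 + w\<^sup>2 / (pi\<^sup>2 * (real k)\<^sup>2))
        = (\<Sum>k=1..n. ln (1 + w\<^sup>2 / (pi\<^sup>2 * (real k)\<^sup>2)))"
      by (intro ln_prod) auto
    then show ?thesis
      by (simp add: sum.atLeast1_atMost_eq del: of_nat_Suc)
  qed
  ultimately show ?thesis
    by (simp add: sums_def)
qed

lemma has_real_derivative_ln_one_plus_sq_div: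
  fixes c x :: real
  assumes "c > 0"
  shows "((\<lambda>x. ln (1 + x\<^sup>2 / c)) has_real_derivative 2 * x / (c + x\<^sup>2)) (at x)"
proof -
  have pos: "1 + x\<^sup>2 / c > 0"
    using assms by (simp add: add_pos_nonneg)
  have "((\<lambda>x. ln (1 + x\<^sup>2 / c)) has_real_derivative (1 / (1 + x\<^sup>2 / c)) * (2 * x / c)) (at x)"
    using assms pos by (auto intro!: derivative_eq_intros)
  also have "(1 / (1 + x\<^sup>2 / c)) * (2 * x / c) = 2 * x / (c + x\<^sup>2)"
    using assms pos by (simp add: field_simps)
  finally show ?thesis .
qed

lemma abs_two_mult_div_pi_sq_plus_sq_le:
  fixes y R :: real
  assumes "\<bar>y\<bar> \<le> R"
  shows "\<bar>2 * y / (pi\<^sup>2 * (real (Suc m))\<^sup>2 + y\<^sup>2)\<bar> \<le> 2 * R / (real (Suc m))\<^sup>2"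
proof -
  have "1 \<le> pi\<^sup>2"
    using pi_gt3 by (simp add: one_le_power)
  then have "(real (Suc m))\<^sup>2 \<le> pi\<^sup>2 * (real (Suc m))\<^sup>2 + y\<^sup>2"
    using mult_right_mono[of 1 "pi\<^sup>2" "(real (Suc m))\<^sup>2"] by (simp add: add_increasing2)
  then have "2 * \<bar>y\<bar> / (pi\<^sup>2 * (real (Suc m))\<^sup>2 + y\<^sup>2) \<le> 2 * R / (real (Suc m))\<^sup>2"
    using assms by (intro frac_le) auto
  then show ?thesis
    by (simp add: abs_mult add_pos_nonneg)
qed

lemma summable_div_Suc_sq: "summable (\<lambda>m. C / (real (Suc m))\<^sup>2)"
  using summable_mult[OF sums_summable[OF inverse_squares_sums], of C] by simp

lemma coth_partial_fractions:
  fixes w :: real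
  assumes "w > 0"
  shows "(\<lambda>m. 2 * w / (pi\<^sup>2 * (real (Suc m))\<^sup>2 + w\<^sup>2)) sums (cosh w / sinh w - 1 / w)"
proof -
  define S where "S = {0 <..< w + 1}"
  have w: "w \<in> S"
    using assms by (simp add: S_def)
  have deriv: "((\<lambda>x. ln (1 + x\<^sup>2 / (pi\<^sup>2 * (real (Suc m))\<^sup>2))) has_real_derivative
      2 * x / (pi\<^sup>2 * (real (Suc m))\<^sup>2 + x\<^sup>2)) (at x)" for m x
    by (rule has_real_derivative_ln_one_plus_sq_div) simp
  have bound: "norm (2 * x / (pi\<^sup>2 * (real (Suc m))\<^sup>2 + x\<^sup>2)) \<le> 2 * (w + 1) / (real (Suc m))\<^sup>2"
    if "x \<in> S" for m x
  proof -
    have "\<bar>x\<bar> \<le> w + 1"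
      using that by (simp add: S_def)
    then show ?thesis
      unfolding real_norm_def by (rule abs_two_mult_div_pi_sq_plus_sq_le)
  qed
  have "summable (\<lambda>m. ln (1 + w\<^sup>2 / (pi\<^sup>2 * (real (Suc m))\<^sup>2)))"
    using assms by (intro sums_summable[OF ln_one_plus_sq_div_pi_sq_sums]) simp
  from has_field_derivative_suminf_Weierstrass(2)[OF _ _ w this w deriv bound summable_div_Suc_sq]
  have "((\<lambda>x. \<Sum>m. ln (1 + x\<^sup>2 / (pi\<^sup>2 * (real (Suc m))\<^sup>2))) has_real_derivative
      (\<Sum>m. 2 * w / (pi\<^sup>2 * (real (Suc m))\<^sup>2 + w\<^sup>2))) (at w)"
    by (simp add: S_def)
  then have "((\<lambda>x. ln (sinh x / x)) has_real_derivative
      (\<Sum>m. 2 * w / (pi\<^sup>2 * (real (Suc m))\<^sup>2 + w\<^sup>2))) (at w)"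
  proof (rule has_field_derivative_transform_within_open)
    show "open {0::real<..}" "w \<in> {0<..}"
      using assms by simp_all
    show "(\<Sum>m. ln (1 + x\<^sup>2 / (pi\<^sup>2 * (real (Suc m))\<^sup>2))) = ln (sinh x / x)"
      if "x \<in> {0<..}" for x
      using that ln_one_plus_sq_div_pi_sq_sums[of x] by (simp add: sums_iff)
  qed
  moreover have "((\<lambda>x. ln (sinh x / x)) has_real_derivative cosh w / sinh w - 1 / w) (at w)"
    using assms by (auto intro!: derivative_eq_intros simp: field_simps power2_eq_square)
  ultimately have "(\<Sum>m. 2 * w / (pi\<^sup>2 * (real (Suc m))\<^sup>2 + w\<^sup>2)) = cosh w / sinh w - 1 / w"
    by (rule DERIV_unique)
  moreover have "summable (\<lambda>m. 2 * w / (pi\<^sup>2 * (real (Suc m))\<^sup>2 + w\<^sup>2))"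
    using bound[OF w] by (rule summable_comparison_test'[OF summable_div_Suc_sq])
  ultimately show ?thesis
    by (simp add: sums_iff)
qed

text \<open>\<open>\<omega>\<^sup>2\<close> times the series of the theorem; unlike that series it is defined, and smooth, at \<open>0\<close>.\<close>

definition sinh_log_series :: "real \<Rightarrow> real" where
  "sinh_log_series x =
     (\<Sum>m. pi\<^sup>2 * (real (Suc m))\<^sup>2 * ln (1 + x\<^sup>2 / (pi\<^sup>2 * (real (Suc m))\<^sup>2)) - x\<^sup>2)"

lemma sinh_log_series_termwise:
  fixes x :: real
  shows "summable (\<lambda>m. pi\<^sup>2 * (real (Suc m))\<^sup>2 * ln (1 + x\<^sup>2 / (pi\<^sup>2 * (real (Suc m))\<^sup>2)) - x\<^sup>2)"
    and "(sinh_log_series has_real_derivative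
          (\<Sum>m. - x\<^sup>2 * (2 * x / (pi\<^sup>2 * (real (Suc m))\<^sup>2 + x\<^sup>2)))) (at x)"
proof -
  define t where "t m y = pi\<^sup>2 * (real (Suc m))\<^sup>2 * ln (1 + y\<^sup>2 / (pi\<^sup>2 * (real (Suc m))\<^sup>2)) - y\<^sup>2"
    for m :: nat and y :: real
  define t' where "t' m y = - y\<^sup>2 * (2 * y / (pi\<^sup>2 * (real (Suc m))\<^sup>2 + y\<^sup>2))" for m :: nat and y :: real
  define R where "R = \<bar>x\<bar> + 1"
  define S where "S = {-R <..< R}"
  have S: "open S" "convex S" "0 \<in> S" "x \<in> S"
    by (auto simp: S_def R_def)
  have deriv: "(t m has_real_derivative t' m y) (at y)" for m y
  proof -
    define c where "c = pi\<^sup>2 * (real (Suc m))\<^sup>2"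
    have c: "c > 0" "c + y\<^sup>2 > 0"
      by (simp_all add: c_def add_pos_nonneg)
    have "((\<lambda>x. c * ln (1 + x\<^sup>2 / c) - x\<^sup>2) has_real_derivative c * (2 * y / (c + y\<^sup>2)) - 2 * y) (at y)"
      by (intro DERIV_diff DERIV_cmult has_real_derivative_ln_one_plus_sq_div c)
        (auto intro!: derivative_eq_intros)
    also have "c * (2 * y / (c + y\<^sup>2)) - 2 * y = - y\<^sup>2 * (2 * y / (c + y\<^sup>2))"
      using c by (simp add: field_simps power2_eq_square)
    finally show ?thesis
      by (simp add: c_def t_def[abs_def] t'_def)
  qed
  have bound: "norm (t' m y) \<le> R\<^sup>2 * (2 * R / (real (Suc m))\<^sup>2)" if "y \<in> S" for m y
  proof -
    have y: "\<bar>y\<bar> \<le> R"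
      using that by (simp add: S_def abs_le_iff)
    have "\<bar>y\<bar>\<^sup>2 \<le> R\<^sup>2"
      using y by (rule power_mono) simp
    moreover have "\<bar>2 * y / (pi\<^sup>2 * (real (Suc m))\<^sup>2 + y\<^sup>2)\<bar> \<le> 2 * R / (real (Suc m))\<^sup>2"
      using y by (rule abs_two_mult_div_pi_sq_plus_sq_le)
    ultimately have "\<bar>y\<bar>\<^sup>2 * \<bar>2 * y / (pi\<^sup>2 * (real (Suc m))\<^sup>2 + y\<^sup>2)\<bar> \<le> R\<^sup>2 * (2 * R / (real (Suc m))\<^sup>2)"
      by (rule mult_mono) auto
    then show ?thesis
      by (simp add: t'_def abs_mult)
  qed
  have "summable (\<lambda>m. R\<^sup>2 * (2 * R / (real (Suc m))\<^sup>2))"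
    using summable_div_Suc_sq[of "R\<^sup>2 * (2 * R)"] by simp
  note termwise = has_field_derivative_suminf_Weierstrass[OF S(1-3) _ S(4) deriv bound this]
  show "summable (\<lambda>m. pi\<^sup>2 * (real (Suc m))\<^sup>2 * ln (1 + x\<^sup>2 / (pi\<^sup>2 * (real (Suc m))\<^sup>2)) - x\<^sup>2)"
    using termwise(1) by (simp add: t_def)
  have "sinh_log_series = (\<lambda>x. \<Sum>m. t m x)"
    by (simp add: sinh_log_series_def[abs_def] t_def)
  then show "(sinh_log_series has_real_derivative
          (\<Sum>m. - x\<^sup>2 * (2 * x / (pi\<^sup>2 * (real (Suc m))\<^sup>2 + x\<^sup>2)))) (at x)"
    using termwise(2) by (simp add: t_def t'_def)
qed

lemma has_real_derivative_sinh_log_series: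
  fixes x :: real
  assumes "x > 0"
  shows "(sinh_log_series has_real_derivative x - x\<^sup>2 * (cosh x / sinh x)) (at x)"
proof -
  have "(\<Sum>m. - x\<^sup>2 * (2 * x / (pi\<^sup>2 * (real (Suc m))\<^sup>2 + x\<^sup>2)))
      = - x\<^sup>2 * (cosh x / sinh x - 1 / x)"
    using sums_mult[OF coth_partial_fractions[OF assms], of "- x\<^sup>2"] by (rule sums_unique[symmetric])
  also have "\<dots> = x - x\<^sup>2 * (cosh x / sinh x)"
    using assms by (simp add: field_simps power2_eq_square)
  finally show ?thesis
    using sinh_log_series_termwise(2)[of x] by simp
qed

lemma sinh_log_series_tendsto_0: "(sinh_log_series \<longlongrightarrow> 0) (at 0)"
proof -
  have "isCont sinh_log_series 0"
    using sinh_log_series_termwise(2) by (rule DERIV_isCont)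
  then show ?thesis
    by (simp add: isCont_def sinh_log_series_def)
qed

lemma sinh_log_series_eq:
  fixes x :: real
  assumes "x \<noteq> 0"
  shows "sinh_log_series x = x\<^sup>2 *
    (\<Sum>m. (pi\<^sup>2 * (real (Suc m))\<^sup>2 / x\<^sup>2) * ln (1 + x\<^sup>2 / (pi\<^sup>2 * (real (Suc m))\<^sup>2)) - 1)"
proof -
  have "(\<lambda>m. (pi\<^sup>2 * (real (Suc m))\<^sup>2 / x\<^sup>2) * ln (1 + x\<^sup>2 / (pi\<^sup>2 * (real (Suc m))\<^sup>2)) - 1)
      = (\<lambda>m. (pi\<^sup>2 * (real (Suc m))\<^sup>2 * ln (1 + x\<^sup>2 / (pi\<^sup>2 * (real (Suc m))\<^sup>2)) - x\<^sup>2) / x\<^sup>2)"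
    using assms by (auto simp: field_simps)
  then show ?thesis
    using assms suminf_divide[OF sinh_log_series_termwise(1), of x "x\<^sup>2"]
    by (simp add: sinh_log_series_def)
qed

lemma summable_polylog:
  fixes z :: real
  assumes "\<bar>z\<bar> < 1"
  shows "summable (\<lambda>n. z ^ Suc n / real (Suc n) ^ k)"
proof (rule summable_comparison_test')
  show "summable (\<lambda>n. \<bar>z\<bar> ^ Suc n)"
    using summable_Suc_iff[of "\<lambda>n. \<bar>z\<bar> ^ n"] summable_geometric[of "\<bar>z\<bar>"] assms by simp
  have "\<bar>z\<bar> ^ Suc n / real (Suc n) ^ k \<le> \<bar>z\<bar> ^ Suc n / 1" for n
    by (rule frac_le) (simp_all del: of_nat_Suc power_Suc)
  then show "norm (z ^ Suc n / real (Suc n) ^ k) \<le> \<bar>z\<bar> ^ Suc n" for n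
    by (simp add: abs_divide power_abs del: of_nat_Suc power_Suc)
qed

lemma abs_polylog_term_le:
  fixes z :: real
  assumes "\<bar>z\<bar> \<le> 1" "k \<ge> 2"
  shows "\<bar>z ^ Suc n / real (Suc n) ^ k\<bar> \<le> 1 / (real (Suc n))\<^sup>2"
proof -
  have "\<bar>z\<bar> ^ Suc n \<le> 1"
    using assms by (simp add: power_le_one del: power_Suc)
  moreover have "(real (Suc n))\<^sup>2 \<le> real (Suc n) ^ k"
    using assms by (intro power_increasing) auto
  ultimately have "\<bar>z\<bar> ^ Suc n / real (Suc n) ^ k \<le> 1 / (real (Suc n))\<^sup>2"
    by (intro frac_le) (simp_all del: of_nat_Suc power_Suc)
  then show ?thesis
    by (simp add: abs_divide power_abs del: of_nat_Suc power_Suc)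
qed

lemma polylog_1:
  fixes z :: real
  assumes "\<bar>z\<bar> < 1"
  shows "polylog 1 z = - ln (1 - z)"
proof -
  have "(\<lambda>n. - ((- (- z)) ^ n) / of_nat n) sums ln (1 + (- z))"
    using assms by (intro ln_series') simp
  then have "(\<lambda>n. - (z ^ Suc n) / real (Suc n)) sums ln (1 - z)"
    by (subst sums_Suc_iff) simp
  then show ?thesis
    unfolding polylog_def using sums_minus by (fastforce simp: sums_iff)
qed

lemma polylog_at_1: "polylog k 1 = zeta (real k)"
  by (simp add: polylog_def zeta_def powr_realpow)

lemma continuous_on_polylog:
  assumes "k \<ge> 2"
  shows "continuous_on {-1..1} (polylog k)"
  unfolding polylog_def[abs_def]
proof (rule continuous_on_suminf_Weierstrass)
  show "norm (z ^ Suc n / real (Suc n) ^ k) \<le> 1 / (real (Suc n))\<^sup>2" if "z \<in> {-1..1}" for n z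
    unfolding real_norm_def using that assms by (intro abs_polylog_term_le) auto
  show "continuous_on {-1..1} (\<lambda>z. z ^ Suc n / real (Suc n) ^ k)" for n
    by (intro continuous_on_divide continuous_intros) (simp del: of_nat_Suc)
  show "summable (\<lambda>n. 1 / (real (Suc n))\<^sup>2)"
    by (rule summable_div_Suc_sq)
qed

lemma has_real_derivative_polylog_exp:
  fixes c x :: real
  assumes "c > 0" "x > 0"
  shows "((\<lambda>x. polylog (Suc k) (exp (- c * x))) has_real_derivative
          - c * polylog k (exp (- c * x))) (at x)"
proof -
  define t where "t n y = exp (- c * y) ^ Suc n / real (Suc n) ^ Suc k" for n :: nat and y :: real
  define t' where "t' n y = - c * (exp (- c * y) ^ Suc n / real (Suc n) ^ k)" for n :: nat and y :: real
  define r where "r = exp (- c * x / 2)"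
  have r: "0 < r" "r < 1"
    using assms by (simp_all add: r_def)
  define S where "S = {x / 2 <..}"
  have S: "open S" "convex S" "x \<in> S"
    using assms by (simp_all add: S_def)
  have deriv: "(t n has_real_derivative t' n y) (at y)" for n y
  proof -
    have "(t n has_real_derivative
        real (Suc n) * exp (- c * y) ^ n * (exp (- c * y) * - c) / real (Suc n) ^ Suc k) (at y)"
      unfolding t_def[abs_def] by (auto intro!: derivative_eq_intros simp del: of_nat_Suc power_Suc)
    also have "real (Suc n) * exp (- c * y) ^ n * (exp (- c * y) * - c) / real (Suc n) ^ Suc k = t' n y"
      by (simp add: t'_def field_simps del: of_nat_Suc)
    finally show ?thesis .
  qed
  have bound: "norm (t' n y) \<le> c * r ^ Suc n" if "y \<in> S" for n y
  proof -
    have "exp (- c * y) \<le> r"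
      using that assms by (simp add: S_def r_def)
    then have "exp (- c * y) ^ Suc n \<le> r ^ Suc n"
      by (rule power_mono) simp
    then have "exp (- c * y) ^ Suc n / real (Suc n) ^ k \<le> r ^ Suc n / 1"
      using r by (intro frac_le) (simp_all del: of_nat_Suc power_Suc)
    then have "c * (exp (- c * y) ^ Suc n / real (Suc n) ^ k) \<le> c * r ^ Suc n"
      using assms by (intro mult_left_mono) simp_all
    then show ?thesis
      using assms by (simp add: t'_def abs_mult del: of_nat_Suc power_Suc)
  qed
  have "summable (\<lambda>n. c * r ^ Suc n)"
    using r summable_Suc_iff[of "\<lambda>n. r ^ n"] summable_geometric[of r] by (intro summable_mult) simp
  moreover have "summable (\<lambda>n. t n x)"
    unfolding t_def using assms by (intro summable_polylog) simp
  ultimately have "((\<lambda>x. \<Sum>n. t n x) has_real_derivative (\<Sum>n. t' n x)) (at x)"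
    by (intro has_field_derivative_suminf_Weierstrass(2)[OF S(1,2,3) _ S(3) deriv bound])
  moreover have "(\<Sum>n. t' n x) = - c * polylog k (exp (- c * x))"
    unfolding t'_def polylog_def using assms by (intro suminf_mult summable_polylog) simp
  ultimately show ?thesis
    by (simp add: t_def polylog_def)
qed

lemma polylog_exp_tendsto_zeta:
  fixes c :: real
  assumes "k \<ge> 2" "c \<ge> 0"
  shows "((\<lambda>x. polylog k (exp (- c * x))) \<longlongrightarrow> zeta (real k)) (at_right 0)"
proof -
  have "((\<lambda>x. exp (- c * x)) \<longlongrightarrow> 1) (at_right 0)"
    using tendsto_exp[OF tendsto_mult_left[OF tendsto_ident_at, of "- c" 0 "{0<..}"]] by simp
  moreover have "exp (- c * x) \<in> {-1..1}" if "x > 0" for x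
  proof -
    have "0 < exp (- c * x)" "exp (- c * x) \<le> 1"
      using assms that by simp_all
    then show ?thesis
      unfolding atLeastAtMost_iff by linarith
  qed
  then have "\<forall>\<^sub>F x in at_right 0. exp (- c * x) \<in> {-1..1}"
    using eventually_at_right_less[of 0] by (auto elim: eventually_mono)
  ultimately have "((\<lambda>x. polylog k (exp (- c * x))) \<longlongrightarrow> polylog k 1) (at_right 0)"
    by (intro continuous_on_tendsto_compose[OF continuous_on_polylog[OF assms(1)]]) auto
  then show ?thesis
    by (simp add: polylog_at_1)
qed

lemma cosh_div_sinh_eq:
  fixes x :: real
  assumes "x \<noteq> 0"
  shows "cosh x / sinh x = (exp (2 * x) + 1) / (exp (2 * x) - 1)"
proof -
  have "exp (2 * x) = exp x * exp x"
    by (simp flip: exp_add)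
  moreover have "exp x * exp x \<noteq> 1"
    using assms by (metis exp_add exp_eq_one_iff mult_2 mult_eq_0_iff zero_neq_numeral)
  ultimately show ?thesis
    by (simp add: cosh_def sinh_def exp_minus field_simps)
qed

lemma ln_exp_minus_one:
  fixes x :: real
  assumes "x > 0"
  shows "ln (exp x - 1) = x + ln (1 - exp (- x))"
proof -
  have "exp x - 1 = exp x * (1 - exp (- x))"
    by (simp add: algebra_simps flip: exp_add)
  then show ?thesis
    using assms by (simp add: ln_mult)
qed

definition zeta3_formula :: "real \<Rightarrow> real" where
  "zeta3_formula x = - 2 * sinh_log_series x + 2 * x * polylog 2 (exp (- 2 * x))
     + polylog 3 (exp (- 2 * x)) - 2 * x\<^sup>2 * ln (exp (2 * x) - 1) + (10 * x + 3) * x\<^sup>2 / 3"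

lemma has_real_derivative_zeta3_formula:
  fixes x :: real
  assumes "x > 0"
  shows "(zeta3_formula has_real_derivative 0) (at x)"
proof -
  define q where "q = exp (- 2 * x)"
  define E where "E = exp (2 * x)"
  have E: "E > 1" "q * E = 1"
    using assms by (simp_all add: q_def E_def flip: exp_add)
  define Li2 where "Li2 x = polylog 2 (exp (- 2 * x))" for x :: real
  define Li3 where "Li3 x = polylog 3 (exp (- 2 * x))" for x :: real
  have dLi2: "(Li2 has_real_derivative 2 * ln (1 - q)) (at x)"
    using has_real_derivative_polylog_exp[of 2 x 1] polylog_1[of q] assms
    by (simp add: Li2_def[abs_def] q_def numeral_2_eq_2)
  have dLi3: "(Li3 has_real_derivative - 2 * polylog 2 q) (at x)"
    using has_real_derivative_polylog_exp[of 2 x 2] assms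
    by (simp add: Li3_def[abs_def] q_def numeral_3_eq_3 numeral_2_eq_2)
  have formula_eq: "zeta3_formula = (\<lambda>x. - 2 * sinh_log_series x + 2 * x * Li2 x + Li3 x
      - 2 * x\<^sup>2 * ln (exp (2 * x) - 1) + (10 * x + 3) * x\<^sup>2 / 3)"
    by (simp add: zeta3_formula_def[abs_def] Li2_def Li3_def)
  have "((\<lambda>x. - 2 * sinh_log_series x) has_real_derivative - 2 * (x - x\<^sup>2 * (cosh x / sinh x))) (at x)"
    using has_real_derivative_sinh_log_series[OF assms] by (rule DERIV_cmult)
  moreover have "((\<lambda>x. 2 * x * Li2 x) has_real_derivative 2 * Li2 x + 2 * x * (2 * ln (1 - q))) (at x)"
    by (auto intro!: derivative_eq_intros dLi2)
  moreover note dLi3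
  moreover have "((\<lambda>x. 2 * x\<^sup>2 * ln (exp (2 * x) - 1)) has_real_derivative
      4 * x * ln (E - 1) + 2 * x\<^sup>2 * (2 * E / (E - 1))) (at x)"
    using E by (auto intro!: derivative_eq_intros simp: E_def field_simps power2_eq_square)
  moreover have "((\<lambda>x. (10 * x + 3) * x\<^sup>2 / 3) has_real_derivative 10 * x\<^sup>2 + 2 * x) (at x)"
    by (auto intro!: derivative_eq_intros simp: field_simps power2_eq_square)
  ultimately have "(zeta3_formula has_real_derivative
      - 2 * (x - x\<^sup>2 * (cosh x / sinh x)) + (2 * Li2 x + 2 * x * (2 * ln (1 - q)))
      + - 2 * polylog 2 q - (4 * x * ln (E - 1) + 2 * x\<^sup>2 * (2 * E / (E - 1)))
      + (10 * x\<^sup>2 + 2 * x)) (at x)"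
    unfolding formula_eq by (intro DERIV_add DERIV_diff)
  moreover have "- 2 * (x - x\<^sup>2 * (cosh x / sinh x)) + (2 * Li2 x + 2 * x * (2 * ln (1 - q)))
      + - 2 * polylog 2 q - (4 * x * ln (E - 1) + 2 * x\<^sup>2 * (2 * E / (E - 1)))
      + (10 * x\<^sup>2 + 2 * x) = 0"
  proof -
    have coth: "cosh x / sinh x = (E + 1) / (E - 1)"
      using assms by (simp add: cosh_div_sinh_eq E_def)
    have ln: "ln (E - 1) = 2 * x + ln (1 - q)"
      using assms by (simp add: ln_exp_minus_one E_def q_def)
    show ?thesis
      unfolding coth ln using E by (simp add: Li2_def q_def divide_simps power2_eq_square) argo
  qed
  ultimately show ?thesis
    by simp
qed

lemma zeta3_formula_tendsto: "(zeta3_formula \<longlongrightarrow> zeta 3) (at_right 0)"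
proof -
  have "(sinh_log_series \<longlongrightarrow> 0) (at_right 0)"
    using sinh_log_series_tendsto_0 by (rule tendsto_within_subset) simp
  moreover have "((\<lambda>x. polylog 2 (exp (- 2 * x))) \<longlongrightarrow> zeta 2) (at_right 0)"
    "((\<lambda>x. polylog 3 (exp (- 2 * x))) \<longlongrightarrow> zeta 3) (at_right 0)"
    using polylog_exp_tendsto_zeta[of 2 2] polylog_exp_tendsto_zeta[of 3 2] by simp_all
  moreover have "((\<lambda>x::real. x\<^sup>2 * ln (exp (2 * x) - 1)) \<longlongrightarrow> 0) (at_right 0)"
    by real_asymp
  ultimately have "(zeta3_formula \<longlongrightarrow> - 2 * 0 + 2 * 0 * zeta 2 + zeta 3 - 2 * 0 + (10 * 0 + 3) * 0\<^sup>2 / 3)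
      (at_right 0)"
    unfolding zeta3_formula_def[abs_def] mult.assoc[of 2 "_\<^sup>2"]
    by (intro tendsto_intros) simp_all
  then show ?thesis
    by simp
qed

theorem mainTheorem18:
  fixes \<omega> :: real
  assumes "\<omega> > 0"
  shows "zeta 3 =
    - 2 * \<omega>\<^sup>2 * (\<Sum>m. (pi\<^sup>2 * (real (Suc m))\<^sup>2 / \<omega>\<^sup>2)
                        * ln (1 + \<omega>\<^sup>2 / (pi\<^sup>2 * (real (Suc m))\<^sup>2)) - 1)
    + 2 * \<omega> * polylog 2 (exp (- 2 * \<omega>))
    + polylog 3 (exp (- 2 * \<omega>))
    - 2 * \<omega>\<^sup>2 * ln (exp (2 * \<omega>) - 1)
    + (10 * \<omega> + 3) * \<omega>\<^sup>2 / 3"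
proof -
  have "zeta3_formula \<omega> = zeta 3"
    using has_real_derivative_zeta3_formula zeta3_formula_tendsto assms
    by (rule has_real_derivative_zero_imp_eq_right_limit)
  then show ?thesis
    using assms by (simp add: zeta3_formula_def sinh_log_series_eq)
qed

end
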